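(* Assume $\mathfrak{d}=\omega_1$, and let $\langle f_\alpha:\alpha<\omega_1\rangle$ be functions in ${}^\omega\omega$ with $f_\alpha<^*f_\beta$ whenever $\alpha<\beta$ and such that for every $g\in{}^\omega\omega$ there is $\alpha$ with $g<^*f_\alpha$. Let $\{P_i:i<\omega\}$ be a partition of $\omega$ into infinite sets, and for $\alpha<\omega_1$ let $Z_\alpha=\{n<\omega:\exists i\,(n\in P_i\text{ and }n>f_\alpha(i))\}$. Let $X$ be the space with underlying set $(\omega\times\omega_1)\cup\{\infty\}$, where all points of $\omega\times\omega_1$ are isolated and a local subbase at $\infty$ consists of the sets $X\setminus(P_i\times\omega_1)$ for $i<\omega$ and $X\setminus(Z_\alpha\times\alpha)$ for $\alpha<\omega_1$. Suppose $U$ is a filter on $\omega$ with dual ideal $I$ such that $P_i\in I$ for all $i<\omega$ and $Z_\alpha\notin I$ for all $\alpha<\omega_1$. Then $X$ is Fréchet and $L$-selective but not $U$-selective.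
   Context: $f<^*g$ means $f(n)<g(n)$ for all but finitely many $n$. A space is Fréchet if whenever $x\in\overline{A}$ there is a sequence in $A$ converging to $x$. $\mathcal{F}(X)$ is the set of nonempty closed subsets of $X$; $\varphi:Y\rightarrow\mathcal{F}(X)$ is lower semicontinuous if for every open $W\subseteq X$, $\{y:\varphi(y)\cap W\neq\emptyset\}$ is open in $Y$. $X$ is $Y$-selective if every lower semicontinuous $\varphi:Y\rightarrow\mathcal{F}(X)$ has a continuous selection $s:Y\rightarrow X$ (i.e., $s(y)\in\varphi(y)$ for all $y$). $X$ is $L$-selective if it is $(\omega+1)$-selective, where $\omega+1$ carries the order topology (a convergent sequence). For a filter $U$ on $\omega$, $Y_U$ is the space on $\omega\cup\{\infty\}$ with points of $\omega$ isolated and neighborhoods of $\infty$ the sets $A\cup\{\infty\}$, $A\in U$; $X$ is $U$-selective if it is $Y_U$-selective. *)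

theory Defs
  imports "HOL-Analysis.Analysis" "HOL-Library.Equipollence"
begin

definition less_star :: "(nat \<Rightarrow> nat) \<Rightarrow> (nat \<Rightarrow> nat) \<Rightarrow> bool" (infix "<*" 50)
  where "f <* g \<longleftrightarrow> finite {n. \<not> f n < g n}"

definition dominating :: "(nat \<Rightarrow> nat) set \<Rightarrow> bool"
  where "dominating D \<longleftrightarrow> (\<forall>g. \<exists>h\<in>D. finite {n. \<not> g n \<le> h n})"

definition dominating_number_is :: "'w set \<Rightarrow> bool"
  where "dominating_number_is W \<longleftrightarrow>
           (\<exists>D. dominating D \<and> D \<lesssim> W) \<and> (\<forall>D. dominating D \<longrightarrow> W \<lesssim> D)"

definition Frechet_space :: "'a topology \<Rightarrow> bool"
  where "Frechet_space X \<longleftrightarrow>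
    (\<forall>A x. A \<subseteq> topspace X \<and> x \<in> X closure_of A \<longrightarrow>
        (\<exists>\<sigma>. range \<sigma> \<subseteq> A \<and> limitin X \<sigma> x sequentially))"

definition lsc_map :: "'b topology \<Rightarrow> 'a topology \<Rightarrow> ('b \<Rightarrow> 'a set) \<Rightarrow> bool"
  where "lsc_map Y X \<phi> \<longleftrightarrow>
    (\<forall>y\<in>topspace Y. \<phi> y \<noteq> {} \<and> closedin X (\<phi> y)) \<and>
    (\<forall>W. openin X W \<longrightarrow> openin Y {y \<in> topspace Y. \<phi> y \<inter> W \<noteq> {}})"

definition selective :: "'b topology \<Rightarrow> 'a topology \<Rightarrow> bool"
  where "selective Y X \<longleftrightarrow>
    (\<forall>\<phi>. lsc_map Y X \<phi> \<longrightarrow>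
       (\<exists>s. continuous_map Y X s \<and> (\<forall>y\<in>topspace Y. s y \<in> \<phi> y)))"

text \<open>L-selective: (\<omega>+1)-selective, \<omega>+1 = enat with its order topology.\<close>
definition L_selective :: "'a topology \<Rightarrow> bool"
  where "L_selective X \<longleftrightarrow> selective (euclidean :: enat topology) X"

text \<open>The space Y_U on \<omega> \<union> {\<infinity>}, with None playing the role of \<infinity>.\<close>
definition filter_space :: "nat filter \<Rightarrow> nat option topology"
  where "filter_space U = topology (\<lambda>S. None \<in> S \<longrightarrow> eventually (\<lambda>n. Some n \<in> S) U)"

definition U_selective :: "nat filter \<Rightarrow> 'a topology \<Rightarrow> bool"
  where "U_selective U X \<longleftrightarrow> selective (filter_space U) X"

text \<open>The space X on (\<omega> \<times> omega_1) \<union> {\<infinity>}, with None playing the role of \<infinity>: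
  topology generated by all singletons of points of \<omega> \<times> omega_1 and the subbasic
  neighbourhoods X - (P i \<times> omega_1), X - (Z \<alpha> \<times> \<alpha>) of \<infinity>.\<close>
definition space_X :: "(nat \<Rightarrow> nat set) \<Rightarrow> ('w::wellorder \<Rightarrow> nat set) \<Rightarrow> (nat \<times> 'w) option topology"
  where "space_X P Z = topology_generated_by
     ({{Some p} | p. True}
      \<union> range (\<lambda>i. - (Some ` (P i \<times> UNIV)))
      \<union> range (\<lambda>\<alpha>. - (Some ` (Z \<alpha> \<times> {\<beta>. \<beta> < \<alpha>}))))"

end

(*
  Call a point x sequentially selective if, whenever every neighbourhood of x eventually
  meets the nonempty sets A n, one can pick points of A n converging to x.  If every point
  is sequentially selective, the space is Frechet (take A n = A) and L-selective (take
  A n = phi n, converging to a point of phi infinity).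

  In X the isolated points are trivially sequentially selective, and so is infinity.  The
  points of A n whose fibre {b. (a, b) in A n} is bounded in omega_1 all lie below a single
  gamma, and a diagonal choice against the countably many sets Z alpha x alpha, alpha <= gamma,
  converges to infinity as far as those subbasic sets are concerned.  Points with unbounded
  fibres are then lifted above an alpha_0 chosen so that f alpha dominates the first
  coordinates of the chosen points for every alpha >= alpha_0.  For alpha < alpha_0 the lifted
  points are harmless and the others have second coordinate below gamma, so Z alpha x alpha
  only matters through Z (min alpha gamma), which contains Z alpha above finitely many levels.

  X is not U-selective: n |-> {n} x omega_1, infinity |-> {infinity} is lower semicontinuous
  on Y_U because every P i lies in the dual ideal of U, but a continuous selection
  n |-> (n, beta n) has all beta n below some gamma, and continuity at infinity would then
  put the complement of Z gamma into U.
*)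
theory Submission
  imports Defs
begin

section \<open>Sequentially selective points\<close>

definition in_lower_limit :: "'a topology \<Rightarrow> 'a \<Rightarrow> (nat \<Rightarrow> 'a set) \<Rightarrow> bool"
  where "in_lower_limit X x A \<longleftrightarrow>
    (\<forall>W. openin X W \<longrightarrow> x \<in> W \<longrightarrow> (\<forall>\<^sub>F n in sequentially. A n \<inter> W \<noteq> {}))"

definition sequentially_selective_at :: "'a topology \<Rightarrow> 'a \<Rightarrow> bool"
  where "sequentially_selective_at X x \<longleftrightarrow>
    (\<forall>A. (\<forall>n. A n \<noteq> {}) \<longrightarrow> in_lower_limit X x A \<longrightarrow>
       (\<exists>\<sigma>. (\<forall>n. \<sigma> n \<in> A n) \<and> limitin X \<sigma> x sequentially))"

lemma sequentially_selective_atD: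
  assumes "sequentially_selective_at X x" and "\<And>n. A n \<noteq> {}" and "in_lower_limit X x A"
  obtains \<sigma> where "\<And>n. \<sigma> n \<in> A n" and "limitin X \<sigma> x sequentially"
  using assms unfolding sequentially_selective_at_def by blast

lemma sequentially_selective_at_isolated:
  assumes "openin X {x}"
  shows "sequentially_selective_at X x"
  unfolding sequentially_selective_at_def
proof (intro allI impI)
  fix A assume ne: "\<forall>n. A n \<noteq> {}" and "in_lower_limit X x A"
  then have ev: "\<forall>\<^sub>F n in sequentially. x \<in> A n"
    using assms unfolding in_lower_limit_def by fastforce
  define \<sigma> where "\<sigma> n = (if x \<in> A n then x else (SOME y. y \<in> A n))" for n
  have \<sigma>_in: "\<sigma> n \<in> A n" for n
    using ne some_in_eq unfolding \<sigma>_def by auto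
  have "\<forall>\<^sub>F n in sequentially. \<sigma> n = x"
    using ev by (rule eventually_mono) (simp add: \<sigma>_def)
  then have "limitin X \<sigma> x sequentially"
    unfolding limitin_def using openin_subset[OF assms] by (auto elim: eventually_mono)
  with \<sigma>_in show "\<exists>\<sigma>. (\<forall>n. \<sigma> n \<in> A n) \<and> limitin X \<sigma> x sequentially"
    by blast
qed

lemma Frechet_space_if_sequentially_selective:
  assumes "\<forall>x\<in>topspace X. sequentially_selective_at X x"
  shows "Frechet_space X"
  unfolding Frechet_space_def
proof (intro allI impI)
  fix A x assume "A \<subseteq> topspace X \<and> x \<in> X closure_of A"
  then have x: "x \<in> topspace X" and meets: "\<And>W. openin X W \<Longrightarrow> x \<in> W \<Longrightarrow> A \<inter> W \<noteq> {}"
    by (auto simp: in_closure_of)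
  have "A \<noteq> {}"
    using meets[OF openin_topspace x] by blast
  moreover have "in_lower_limit X x (\<lambda>_. A)"
    using meets unfolding in_lower_limit_def by simp
  moreover have "sequentially_selective_at X x"
    using assms x by blast
  ultimately obtain \<sigma> where "\<And>n. \<sigma> n \<in> A" "limitin X \<sigma> x sequentially"
    using sequentially_selective_atD[of X x "\<lambda>_. A"] by blast
  then show "\<exists>\<sigma>. range \<sigma> \<subseteq> A \<and> limitin X \<sigma> x sequentially"
    by blast
qed

lemma eventually_enat_if_open:
  assumes "open S" and "\<infinity> \<in> S"
  shows "\<forall>\<^sub>F n in sequentially. enat n \<in> S"
proof -
  obtain N where "{enat N<..} \<subseteq> S"
    using assms open_enat_iff by blast
  then show ?thesis
    unfolding eventually_sequentially by (intro exI[of _ "Suc N"]) auto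
qed

lemma continuous_map_enat:
  assumes "\<And>y. s y \<in> topspace X"
    and "limitin X (\<lambda>n. s (enat n)) (s \<infinity>) sequentially"
  shows "continuous_map euclidean X s"
  unfolding continuous_map_def
proof (intro conjI allI impI)
  show "s \<in> topspace euclidean \<rightarrow> topspace X"
    using assms(1) by blast
next
  fix W assume W: "openin X W"
  have "open {y. s y \<in> W}"
    unfolding open_enat_iff
  proof
    assume "\<infinity> \<in> {y. s y \<in> W}"
    then obtain N where "\<forall>n\<ge>N. s (enat n) \<in> W"
      using assms(2) W unfolding limitin_def eventually_sequentially by auto
    then have "s y \<in> W" if "enat N < y" for y
      using that \<open>\<infinity> \<in> {y. s y \<in> W}\<close> by (cases y) auto
    then have "{enat N<..} \<subseteq> {y. s y \<in> W}"
      by auto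
    then show "\<exists>n. {enat n<..} \<subseteq> {y. s y \<in> W}" ..
  qed
  then show "openin euclidean {y \<in> topspace euclidean. s y \<in> W}"
    by simp
qed

lemma L_selective_if_sequentially_selective:
  assumes "\<forall>x\<in>topspace X. sequentially_selective_at X x"
  shows "L_selective X"
  unfolding L_selective_def selective_def
proof (intro allI impI)
  fix \<phi> :: "enat \<Rightarrow> 'a set" assume lsc: "lsc_map euclidean X \<phi>"
  then have ne: "\<phi> y \<noteq> {}" and sub: "\<phi> y \<subseteq> topspace X" for y
    unfolding lsc_map_def by (auto dest: closedin_subset)
  then obtain x where x: "x \<in> \<phi> \<infinity>"
    by blast
  have "in_lower_limit X x (\<lambda>n. \<phi> (enat n))"
    unfolding in_lower_limit_def
  proof (intro allI impI)
    fix W assume "openin X W" "x \<in> W"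
    then have "open {y. \<phi> y \<inter> W \<noteq> {}}" and "\<infinity> \<in> {y. \<phi> y \<inter> W \<noteq> {}}"
      using lsc x unfolding lsc_map_def by auto
    then show "\<forall>\<^sub>F n in sequentially. \<phi> (enat n) \<inter> W \<noteq> {}"
      using eventually_enat_if_open by fastforce
  qed
  moreover have "sequentially_selective_at X x"
    using assms sub x by blast
  ultimately obtain \<sigma> where \<sigma>: "\<And>n. \<sigma> n \<in> \<phi> (enat n)" and lim: "limitin X \<sigma> x sequentially"
    using ne by (metis sequentially_selective_atD)
  define s where "s y = (case y of enat n \<Rightarrow> \<sigma> n | \<infinity> \<Rightarrow> x)" for y
  have s_in: "s y \<in> \<phi> y" for y
    using \<sigma> x by (cases y) (simp_all add: s_def)
  have "continuous_map euclidean X s"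
    using sub s_in lim by (intro continuous_map_enat) (auto simp: s_def)
  with s_in show "\<exists>s. continuous_map euclidean X s \<and> (\<forall>y\<in>topspace euclidean. s y \<in> \<phi> y)"
    by blast
qed

section \<open>The point at infinity of X\<close>

definition basic_nbhd ::
    "(nat \<Rightarrow> nat set) \<Rightarrow> ('w::wellorder \<Rightarrow> nat set) \<Rightarrow> nat \<Rightarrow> 'w set \<Rightarrow> (nat \<times> 'w) option set"
  where "basic_nbhd P Z k E =
    (\<Inter>i<k. - Some ` (P i \<times> UNIV)) \<inter> (\<Inter>\<alpha>\<in>E. - Some ` (Z \<alpha> \<times> {\<beta>. \<beta> < \<alpha>}))"

lemma None_in_basic_nbhd [simp]: "None \<in> basic_nbhd P Z k E"
  by (auto simp: basic_nbhd_def)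

lemma Some_in_basic_nbhd_iff [simp]:
  "Some (a, b) \<in> basic_nbhd P Z k E \<longleftrightarrow> (\<forall>i<k. a \<notin> P i) \<and> (\<forall>\<alpha>\<in>E. a \<in> Z \<alpha> \<longrightarrow> \<not> b < \<alpha>)"
  by (auto simp: basic_nbhd_def)

lemma basic_nbhd_antimono: "k \<le> k' \<Longrightarrow> E \<subseteq> E' \<Longrightarrow> basic_nbhd P Z k' E' \<subseteq> basic_nbhd P Z k E"
  by (auto simp: basic_nbhd_def)

lemma basic_nbhd_0_empty [simp]: "basic_nbhd P Z 0 {} = UNIV"
  by (simp add: basic_nbhd_def)

lemma basic_nbhd_eq_Int: "basic_nbhd P Z k E = basic_nbhd P Z k {} \<inter> (\<Inter>\<alpha>\<in>E. basic_nbhd P Z 0 {\<alpha>})"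
  by (simp add: basic_nbhd_def)

lemma basic_nbhd_fst_cong:
  "map_option fst y = map_option fst y' \<Longrightarrow> y \<in> basic_nbhd P Z k {} \<longleftrightarrow> y' \<in> basic_nbhd P Z k {}"
  by (cases y; cases y') auto

lemma topspace_space_X [simp]: "topspace (space_X P Z) = UNIV"
proof -
  have "x \<in> \<Union>({{Some p} | p. True} \<union> range (\<lambda>i. - (Some ` (P i \<times> UNIV)))
      \<union> range (\<lambda>\<alpha>. - (Some ` (Z \<alpha> \<times> {\<beta>. \<beta> < \<alpha>}))))" for x
    by (cases x) auto
  then show ?thesis
    unfolding space_X_def topology_generated_by_topspace by blast
qed

lemma openin_space_X_Some: "openin (space_X P Z) {Some p}"
  unfolding space_X_def by (rule topology_generated_by_Basis) blast

lemma openin_space_X_basic_nbhd: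
  assumes "finite E"
  shows "openin (space_X P Z) (basic_nbhd P Z k E)"
proof -
  have "openin (space_X P Z) ((\<Inter>i<k. - Some ` (P i \<times> UNIV)) \<inter> topspace (space_X P Z))"
    unfolding space_X_def by (intro openin_INT topology_generated_by_Basis) blast+
  moreover have "openin (space_X P Z)
      ((\<Inter>\<alpha>\<in>E. - Some ` (Z \<alpha> \<times> {\<beta>. \<beta> < \<alpha>})) \<inter> topspace (space_X P Z))"
    unfolding space_X_def using assms by (intro openin_INT topology_generated_by_Basis) blast+
  ultimately show ?thesis
    unfolding basic_nbhd_def by (simp add: openin_Int)
qed

lemma openin_space_X_imp_basic_nbhd:
  assumes "openin (space_X P Z) S"
  shows "None \<in> S \<longrightarrow> (\<exists>k E. finite E \<and> basic_nbhd P Z k E \<subseteq> S)"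
    (is "?nbhd S")
proof -
  have "istopology ?nbhd"
    unfolding istopology_def
  proof (intro conjI allI impI)
    fix S T assume S: "?nbhd S" and T: "?nbhd T" and "None \<in> S \<inter> T"
    then obtain k E k' E' where "finite E" "basic_nbhd P Z k E \<subseteq> S"
      and "finite E'" "basic_nbhd P Z k' E' \<subseteq> T"
      by blast
    moreover have "basic_nbhd P Z (max k k') (E \<union> E') \<subseteq> basic_nbhd P Z k E"
      and "basic_nbhd P Z (max k k') (E \<union> E') \<subseteq> basic_nbhd P Z k' E'"
      by (simp_all add: basic_nbhd_antimono)
    ultimately show "\<exists>k E. finite E \<and> basic_nbhd P Z k E \<subseteq> S \<inter> T"
      by (metis finite_UnI le_inf_iff subset_trans)
  next
    fix K assume K: "\<forall>S\<in>K. ?nbhd S" and "None \<in> \<Union>K"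
    then obtain S where "S \<in> K" and "None \<in> S"
      by blast
    moreover obtain k E where "finite E" and "basic_nbhd P Z k E \<subseteq> S"
      using K calculation by blast
    ultimately show "\<exists>k E. finite E \<and> basic_nbhd P Z k E \<subseteq> \<Union>K"
      by blast
  qed
  moreover have "?nbhd B"
    if "B \<in> {{Some p} | p. True} \<union> range (\<lambda>i. - (Some ` (P i \<times> UNIV)))
      \<union> range (\<lambda>\<alpha>. - (Some ` (Z \<alpha> \<times> {\<beta>. \<beta> < \<alpha>})))" for B
  proof -
    have "basic_nbhd P Z (Suc i) {} \<subseteq> - (Some ` (P i \<times> UNIV))" for i
      by (auto simp: basic_nbhd_def)
    moreover have "basic_nbhd P Z 0 {\<alpha>} \<subseteq> - (Some ` (Z \<alpha> \<times> {\<beta>. \<beta> < \<alpha>}))" for \<alpha>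
      by (auto simp: basic_nbhd_def)
    ultimately show ?thesis
      using that by blast
  qed
  moreover have "generate_topology_on ({{Some p} | p. True} \<union> range (\<lambda>i. - (Some ` (P i \<times> UNIV)))
      \<union> range (\<lambda>\<alpha>. - (Some ` (Z \<alpha> \<times> {\<beta>. \<beta> < \<alpha>})))) S"
    using assms unfolding space_X_def openin_topology_generated_by_iff .
  ultimately show "?nbhd S"
    by (rule generate_topology_on_coarsest)
qed

lemma openin_space_X_iff:
  "openin (space_X P Z) S \<longleftrightarrow> (None \<in> S \<longrightarrow> (\<exists>k E. finite E \<and> basic_nbhd P Z k E \<subseteq> S))"
    (is "_ \<longleftrightarrow> ?nbhd S")
proof
  show "openin (space_X P Z) S \<Longrightarrow> ?nbhd S"
    by (rule openin_space_X_imp_basic_nbhd)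
next
  assume S: "?nbhd S"
  have single: "openin (space_X P Z) {x}" if "x \<noteq> None" for x
    using that openin_space_X_Some by (cases x) auto
  have "openin (space_X P Z) (\<Union>x\<in>S - {None}. {x})"
    by (intro openin_Union) (use single in blast)
  then have "openin (space_X P Z) (S - {None})"
    by simp
  show "openin (space_X P Z) S"
  proof (cases "None \<in> S")
    case True
    then obtain k E where "finite E" and "basic_nbhd P Z k E \<subseteq> S"
      using S by blast
    moreover from calculation have "S = (S - {None}) \<union> basic_nbhd P Z k E"
      using True by auto
    ultimately show ?thesis
      using \<open>openin (space_X P Z) (S - {None})\<close> by (metis openin_Un openin_space_X_basic_nbhd)
  qed (use \<open>openin (space_X P Z) (S - {None})\<close> in simp)
qed

lemma limitin_space_X_NoneI:
  assumes "\<And>k. \<forall>\<^sub>F n in F. \<sigma> n \<in> basic_nbhd P Z k {}"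
    and "\<And>\<alpha>. \<forall>\<^sub>F n in F. \<sigma> n \<in> basic_nbhd P Z 0 {\<alpha>}"
  shows "limitin (space_X P Z) \<sigma> None F"
  unfolding limitin_def
proof (intro conjI allI impI)
  fix W assume "openin (space_X P Z) W \<and> None \<in> W"
  then obtain k E where "finite E" and sub: "basic_nbhd P Z k E \<subseteq> W"
    by (auto simp: openin_space_X_iff)
  then have "\<forall>\<^sub>F n in F. \<sigma> n \<in> basic_nbhd P Z k {} \<and> (\<forall>\<alpha>\<in>E. \<sigma> n \<in> basic_nbhd P Z 0 {\<alpha>})"
    using assms by (intro eventually_conj eventually_ball_finite) auto
  then have "\<forall>\<^sub>F n in F. \<sigma> n \<in> basic_nbhd P Z k E"
    by (rule eventually_mono) (subst basic_nbhd_eq_Int, blast)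
  then show "\<forall>\<^sub>F n in F. \<sigma> n \<in> W"
    using sub by (auto elim: eventually_mono)
qed simp

lemma exists_index_tendsto:
  fixes Q :: "nat \<Rightarrow> nat \<Rightarrow> bool"
  assumes "\<And>n. Q n 0" and "\<And>m. \<forall>\<^sub>F n in sequentially. Q n m"
  obtains \<mu> where "\<And>n. Q n (\<mu> n)" and "filterlim \<mu> sequentially sequentially"
proof
  define \<mu> where "\<mu> n = Max {m. m \<le> n \<and> Q n m}" for n
  show "Q n (\<mu> n)" for n
    using Max_in[of "{m. m \<le> n \<and> Q n m}"] assms(1) unfolding \<mu>_def by fastforce
  show "filterlim \<mu> sequentially sequentially"
    unfolding filterlim_at_top
  proof
    fix M
    show "\<forall>\<^sub>F n in sequentially. M \<le> \<mu> n"
      using eventually_conj[OF assms(2)[of M] eventually_ge_at_top[of M]]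
      by (rule eventually_mono) (simp add: \<mu>_def)
  qed
qed

lemma countable_finite_exhaustion:
  assumes "countable D"
  obtains F :: "nat \<Rightarrow> 'a set"
  where "F 0 = {}" and "\<And>m. finite (F m)" and "\<And>x. x \<in> D \<Longrightarrow> \<forall>\<^sub>F m in sequentially. x \<in> F m"
proof
  show "\<forall>\<^sub>F m in sequentially. x \<in> from_nat_into D ` {..<m}" if "x \<in> D" for x
    unfolding eventually_sequentially using assms that
    by (intro exI[of _ "Suc (to_nat_on D x)"]) (metis from_nat_into_to_nat_on image_eqI lessThan_iff Suc_le_eq)
qed simp_all

lemma countable_diagonal_selection:
  assumes ne: "\<And>n. A n \<noteq> {}" and lim: "in_lower_limit (space_X P Z) None A"
    and "countable D"
  obtains x where "\<And>n. x n \<in> A n"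
    and "\<And>k E. finite E \<Longrightarrow> E \<subseteq> D \<Longrightarrow> \<forall>\<^sub>F n in sequentially. x n \<in> basic_nbhd P Z k E"
proof -
  obtain F where F0: "F 0 = {}" and fin: "\<And>m. finite (F m)"
    and exh: "\<And>\<alpha>. \<alpha> \<in> D \<Longrightarrow> \<forall>\<^sub>F m in sequentially. \<alpha> \<in> F m"
    using countable_finite_exhaustion[OF \<open>countable D\<close>] by blast
  define Q where "Q n m \<longleftrightarrow> A n \<inter> basic_nbhd P Z m (F m) \<noteq> {}" for n m
  have "Q n 0" for n
    using ne F0 by (simp add: Q_def)
  moreover have "\<forall>\<^sub>F n in sequentially. Q n m" for m
    using lim openin_space_X_basic_nbhd[OF fin] unfolding in_lower_limit_def Q_def by simp
  ultimately obtain \<mu> where Q\<mu>: "\<And>n. Q n (\<mu> n)" and \<mu>: "filterlim \<mu> sequentially sequentially"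
    by (rule exists_index_tendsto) blast
  define x where "x n = (SOME y. y \<in> A n \<inter> basic_nbhd P Z (\<mu> n) (F (\<mu> n)))" for n
  have x: "x n \<in> A n \<inter> basic_nbhd P Z (\<mu> n) (F (\<mu> n))" for n
    using Q\<mu>[of n] unfolding Q_def x_def by (metis some_in_eq)
  show thesis
  proof (rule that)
    show "x n \<in> A n" for n
      using x by blast
    fix k E assume "finite E" and "E \<subseteq> D"
    then have "\<forall>\<^sub>F m in sequentially. k \<le> m \<and> (\<forall>\<alpha>\<in>E. \<alpha> \<in> F m)"
      using exh by (intro eventually_conj eventually_ge_at_top eventually_ball_finite) auto
    then have "\<forall>\<^sub>F n in sequentially. k \<le> \<mu> n \<and> (\<forall>\<alpha>\<in>E. \<alpha> \<in> F (\<mu> n))"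
      using \<mu> by (rule eventually_compose_filterlim)
    then show "\<forall>\<^sub>F n in sequentially. x n \<in> basic_nbhd P Z k E"
    proof (rule eventually_mono)
      fix n assume "k \<le> \<mu> n \<and> (\<forall>\<alpha>\<in>E. \<alpha> \<in> F (\<mu> n))"
      then have "basic_nbhd P Z (\<mu> n) (F (\<mu> n)) \<subseteq> basic_nbhd P Z k E"
        by (intro basic_nbhd_antimono) auto
      then show "x n \<in> basic_nbhd P Z k E"
        using x by blast
    qed
  qed
qed

section \<open>Countable sets of countable ordinals and the scale\<close>

lemma less_star_trans:
  assumes "f <* g" and "g <* h"
  shows "f <* h"
proof -
  have "{n. \<not> f n < h n} \<subseteq> {n. \<not> f n < g n} \<union> {n. \<not> g n < h n}"
    by auto
  with assms show ?thesis
    unfolding less_star_def by (simp add: finite_subset)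
qed

lemma countable_bounded:
  fixes S :: "'w::wellorder set"
  assumes "uncountable (UNIV :: 'w set)" and "\<forall>\<alpha>::'w. countable {\<beta>. \<beta> < \<alpha>}"
    and "countable S"
  obtains \<gamma> where "\<And>\<beta>. \<beta> \<in> S \<Longrightarrow> \<beta> < \<gamma>"
proof -
  have "countable (\<Union>\<beta>\<in>S. insert \<beta> {\<alpha>. \<alpha> < \<beta>})"
    using assms(2,3) by (intro countable_UN) auto
  then obtain \<gamma> where "\<gamma> \<notin> (\<Union>\<beta>\<in>S. insert \<beta> {\<alpha>. \<alpha> < \<beta>})"
    using assms(1) by (metis UNIV_eq_I)
  then show thesis
    using that by (auto simp: not_less_iff_gr_or_eq)
qed

lemma countable_Union_bounded:
  fixes S :: "'i \<Rightarrow> 'w::wellorder set"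
  assumes "uncountable (UNIV :: 'w set)" and seg: "\<forall>\<alpha>::'w. countable {\<beta>. \<beta> < \<alpha>}"
    and "countable I" and bdd: "\<And>i. i \<in> I \<Longrightarrow> \<exists>\<delta>. \<forall>\<beta>\<in>S i. \<beta> < \<delta>"
  obtains \<gamma> where "\<And>i \<beta>. i \<in> I \<Longrightarrow> \<beta> \<in> S i \<Longrightarrow> \<beta> < \<gamma>"
proof -
  have "countable (S i)" if i: "i \<in> I" for i
  proof -
    obtain \<delta> where "\<forall>\<beta>\<in>S i. \<beta> < \<delta>"
      using bdd[OF i] by blast
    then show ?thesis
      using countable_subset[of "S i" "{\<beta>. \<beta> < \<delta>}"] seg by blast
  qed
  then have "countable (\<Union>i\<in>I. S i)"
    using \<open>countable I\<close> by blast
  then obtain \<gamma> where "\<And>\<beta>. \<beta> \<in> (\<Union>i\<in>I. S i) \<Longrightarrow> \<beta> < \<gamma>"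
    by (rule countable_bounded[OF assms(1,2)]) blast
  then show thesis
    using that by blast
qed

lemma bounded_fibres_bounded:
  fixes A :: "nat \<Rightarrow> ('a::countable \<times> 'w::wellorder) option set"
  assumes unc: "uncountable (UNIV :: 'w set)" and seg: "\<forall>\<alpha>::'w. countable {\<beta>. \<beta> < \<alpha>}"
  obtains \<gamma> where
    "\<And>n a b. Some (a, b) \<in> A n \<Longrightarrow> \<exists>\<delta>. \<forall>b'. Some (a, b') \<in> A n \<longrightarrow> b' < \<delta> \<Longrightarrow> b < \<gamma>"
proof -
  define fibre where
    "fibre = (\<lambda>(n, a). {b. Some (a, b) \<in> A n \<and> (\<exists>\<delta>. \<forall>b'. Some (a, b') \<in> A n \<longrightarrow> b' < \<delta>)})"
  have fibre_bdd: "\<exists>\<delta>. \<forall>b\<in>fibre i. b < \<delta>" for i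
  proof (cases i)
    case (Pair n a)
    show ?thesis
    proof (cases "\<exists>\<delta>. \<forall>b'. Some (a, b') \<in> A n \<longrightarrow> b' < \<delta>")
      case True
      then obtain \<delta> where "\<forall>b'. Some (a, b') \<in> A n \<longrightarrow> b' < \<delta>"
        by blast
      then show ?thesis
        by (intro exI[of _ \<delta>]) (simp add: fibre_def Pair)
    next
      case False
      then have "fibre i = {}"
        unfolding fibre_def Pair by blast
      then show ?thesis
        by simp
    qed
  qed
  obtain \<gamma> where \<gamma>: "\<And>i b. i \<in> UNIV \<Longrightarrow> b \<in> fibre i \<Longrightarrow> b < \<gamma>"
    by (rule countable_Union_bounded[OF unc seg, of UNIV fibre]) (use fibre_bdd in auto)
  show thesis
  proof (rule that)
    fix n a b assume "Some (a, b) \<in> A n" and "\<exists>\<delta>. \<forall>b'. Some (a, b') \<in> A n \<longrightarrow> b' < \<delta>"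
    then show "b < \<gamma>"
      using \<gamma>[of "(n, a)" b] by (simp add: fibre_def)
  qed
qed

lemma exists_dominating_tail:
  assumes f_incr: "\<forall>\<alpha> \<beta>. \<alpha> < \<beta> \<longrightarrow> f \<alpha> <* f \<beta>" and f_dom: "\<forall>g. \<exists>\<alpha>. g <* f \<alpha>"
  obtains \<alpha>\<^sub>0 :: "'w::linorder" where "\<And>\<alpha>. \<alpha>\<^sub>0 \<le> \<alpha> \<Longrightarrow> g <* f \<alpha>"
proof -
  obtain \<alpha>\<^sub>0 where "g <* f \<alpha>\<^sub>0"
    using f_dom by blast
  then have "g <* f \<alpha>" if "\<alpha>\<^sub>0 \<le> \<alpha>" for \<alpha>
    using that f_incr less_star_trans by (cases "\<alpha>\<^sub>0 = \<alpha>") auto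
  then show thesis
    using that by blast
qed

lemma Z_almost_antimono:
  fixes f :: "'w::linorder \<Rightarrow> nat \<Rightarrow> nat"
  assumes f_incr: "\<forall>\<alpha> \<beta>. \<alpha> < \<beta> \<longrightarrow> f \<alpha> <* f \<beta>"
    and Z_def: "\<forall>\<alpha>. Z \<alpha> = {n. \<exists>i. n \<in> P i \<and> n > f \<alpha> i}"
    and "\<gamma> \<le> \<alpha>"
  obtains c where "\<And>a. a \<in> Z \<alpha> \<Longrightarrow> \<forall>i<c. a \<notin> P i \<Longrightarrow> a \<in> Z \<gamma>"
proof (cases "\<gamma> = \<alpha>")
  case False
  with \<open>\<gamma> \<le> \<alpha>\<close> have "\<gamma> < \<alpha>"
    by simp
  then have "f \<gamma> <* f \<alpha>"
    using f_incr by blast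
  then have "finite {i. \<not> f \<gamma> i < f \<alpha> i}"
    by (simp add: less_star_def)
  then obtain c where c: "\<And>i. \<not> f \<gamma> i < f \<alpha> i \<Longrightarrow> i < c"
    by (metis finite_nat_set_iff_bounded mem_Collect_eq)
  have "a \<in> Z \<gamma>" if "a \<in> Z \<alpha>" and high: "\<forall>i<c. a \<notin> P i" for a
  proof -
    obtain i where "a \<in> P i" and "f \<alpha> i < a"
      using \<open>a \<in> Z \<alpha>\<close> Z_def by auto
    moreover from calculation have "f \<gamma> i < f \<alpha> i"
      using c high by blast
    ultimately show "a \<in> Z \<gamma>"
      using Z_def by auto
  qed
  then show thesis
    using that by blast
qed (use that in blast)

lemma exists_levelwise_bound:
  assumes "\<And>k. \<forall>\<^sub>F n in sequentially. x n \<in> basic_nbhd P Z k {}"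
  obtains g where "\<And>n a b i. x n = Some (a, b) \<Longrightarrow> a \<in> P i \<Longrightarrow> a \<le> g i"
proof -
  have "\<forall>i. \<exists>N. \<forall>n\<ge>N. x n \<in> basic_nbhd P Z (Suc i) {}"
    using assms unfolding eventually_sequentially by blast
  then obtain N where N: "\<And>i n. N i \<le> n \<Longrightarrow> x n \<in> basic_nbhd P Z (Suc i) {}"
    by metis
  define g where "g i = Max ((\<lambda>n. case x n of None \<Rightarrow> 0 | Some (a, b) \<Rightarrow> a) ` {..<N i})" for i
  have "a \<le> g i" if "x n = Some (a, b)" and "a \<in> P i" for n a b i
  proof -
    have "n < N i"
      using N[of i n] that by (metis Some_in_basic_nbhd_iff lessI not_le)
    then show ?thesis
      unfolding g_def using that by (intro Max_ge) (auto intro: rev_image_eqI[of n])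
  qed
  then show thesis
    using that by blast
qed

lemma eventually_basic_nbhd_if_dominated:
  assumes Z_def: "\<forall>\<alpha>. Z \<alpha> = {n. \<exists>i. n \<in> P i \<and> n > f \<alpha> i}"
    and lev: "\<And>k. \<forall>\<^sub>F n in F. x n \<in> basic_nbhd P Z k {}"
    and bound: "\<And>n a b i. x n = Some (a, b) \<Longrightarrow> a \<in> P i \<Longrightarrow> a \<le> g i"
    and "g <* f \<alpha>"
  shows "\<forall>\<^sub>F n in F. x n \<in> basic_nbhd P Z 0 {\<alpha>}"
proof -
  obtain K where K: "\<And>i. \<not> g i < f \<alpha> i \<Longrightarrow> i < K"
    using \<open>g <* f \<alpha>\<close> unfolding less_star_def by (metis finite_nat_set_iff_bounded mem_Collect_eq)
  show ?thesis
    using lev[of K]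
  proof (rule eventually_mono)
    fix n assume xn: "x n \<in> basic_nbhd P Z K {}"
    have "a \<notin> Z \<alpha>" if "x n = Some (a, b)" for a b
    proof
      assume "a \<in> Z \<alpha>"
      then obtain i where "a \<in> P i" and "f \<alpha> i < a"
        using Z_def by auto
      moreover from calculation have "g i < f \<alpha> i"
        using xn that K by (metis Some_in_basic_nbhd_iff not_le)
      ultimately show False
        using bound[OF that] by (meson leD less_trans)
    qed
    then show "x n \<in> basic_nbhd P Z 0 {\<alpha>}"
      by (cases "x n") auto
  qed
qed

section \<open>Selections converging to infinity\<close>

lemma lift_unbounded_fibres:
  fixes A :: "nat \<Rightarrow> ('a \<times> 'w::linorder) option set"
  assumes "\<And>n. x n \<in> A n"
  obtains \<sigma> where "\<And>n. \<sigma> n \<in> A n" and "\<And>n. map_option fst (\<sigma> n) = map_option fst (x n)"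
    and "\<And>n a b. \<sigma> n = Some (a, b) \<Longrightarrow> b < \<alpha>\<^sub>0 \<Longrightarrow>
           \<sigma> n = x n \<and> (\<exists>\<delta>. \<forall>b'. Some (a, b') \<in> A n \<longrightarrow> b' < \<delta>)"
proof
  define bounded where "bounded n a \<longleftrightarrow> (\<exists>\<delta>. \<forall>b'. Some (a, b') \<in> A n \<longrightarrow> b' < \<delta>)" for n a
  define lift where "lift n a = (SOME b. Some (a, b) \<in> A n \<and> \<alpha>\<^sub>0 \<le> b)" for n a
  have lift: "Some (a, lift n a) \<in> A n \<and> \<alpha>\<^sub>0 \<le> lift n a" if "\<not> bounded n a" for n a
  proof -
    have "\<not> (\<forall>b. Some (a, b) \<in> A n \<longrightarrow> b < \<alpha>\<^sub>0)"
      using that unfolding bounded_def by blast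
    then have "\<exists>b. Some (a, b) \<in> A n \<and> \<alpha>\<^sub>0 \<le> b"
      by (auto simp: not_less)
    then show ?thesis
      unfolding lift_def by (rule someI_ex)
  qed
  define \<sigma> where "\<sigma> n = map_option (\<lambda>(a, b). (a, if bounded n a then b else lift n a)) (x n)" for n
  show "\<sigma> n \<in> A n" for n
    using assms[of n] lift by (cases "x n") (auto simp: \<sigma>_def)
  show "map_option fst (\<sigma> n) = map_option fst (x n)" for n
    by (cases "x n") (auto simp: \<sigma>_def)
  show "\<sigma> n = x n \<and> bounded n a" if "\<sigma> n = Some (a, b)" and "b < \<alpha>\<^sub>0" for n a b
    using that lift[of n a] by (cases "x n") (auto simp: \<sigma>_def split: if_splits)
qed

lemma eventually_basic_nbhd_below_lift:
  fixes f :: "'w::wellorder \<Rightarrow> nat \<Rightarrow> nat"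
  assumes f_incr: "\<forall>\<alpha> \<beta>. \<alpha> < \<beta> \<longrightarrow> f \<alpha> <* f \<beta>"
    and Z_def: "\<forall>\<alpha>. Z \<alpha> = {n. \<exists>i. n \<in> P i \<and> n > f \<alpha> i}"
    and x_lim: "\<And>k E. finite E \<Longrightarrow> E \<subseteq> {..\<gamma>} \<Longrightarrow> \<forall>\<^sub>F n in F. x n \<in> basic_nbhd P Z k E"
    and low: "\<And>n a b. \<sigma> n = Some (a, b) \<Longrightarrow> b < \<alpha>\<^sub>0 \<Longrightarrow> \<sigma> n = x n \<and> b < \<gamma>"
    and "\<alpha> < \<alpha>\<^sub>0"
  shows "\<forall>\<^sub>F n in F. \<sigma> n \<in> basic_nbhd P Z 0 {\<alpha>}"
proof -
  define \<delta> where "\<delta> = min \<alpha> \<gamma>"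
  have "\<delta> \<le> \<alpha>"
    by (simp add: \<delta>_def)
  then obtain c where c: "\<And>a. a \<in> Z \<alpha> \<Longrightarrow> \<forall>i<c. a \<notin> P i \<Longrightarrow> a \<in> Z \<delta>"
    by (rule Z_almost_antimono[OF f_incr Z_def]) blast
  have "\<forall>\<^sub>F n in F. x n \<in> basic_nbhd P Z c {\<delta>}"
    using x_lim by (simp add: \<delta>_def)
  then show ?thesis
  proof (rule eventually_mono)
    fix n assume xn: "x n \<in> basic_nbhd P Z c {\<delta>}"
    have "\<not> (a \<in> Z \<alpha> \<and> b < \<alpha>)" if "\<sigma> n = Some (a, b)" for a b
    proof
      assume "a \<in> Z \<alpha> \<and> b < \<alpha>"
      then have "a \<in> Z \<alpha>" and "b < \<alpha>"
        by simp_all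
      with \<open>\<alpha> < \<alpha>\<^sub>0\<close> have "x n = Some (a, b)" and "b < \<gamma>"
        using low[OF that] that by simp_all
      with \<open>b < \<alpha>\<close> xn have "\<forall>i<c. a \<notin> P i" and "a \<notin> Z \<delta>"
        by (simp_all add: \<delta>_def)
      with c \<open>a \<in> Z \<alpha>\<close> show False
        by blast
    qed
    then show "\<sigma> n \<in> basic_nbhd P Z 0 {\<alpha>}"
      by (cases "\<sigma> n") auto
  qed
qed

lemma limitin_space_X_None_lifted:
  fixes f :: "'w::wellorder \<Rightarrow> nat \<Rightarrow> nat"
  assumes f_incr: "\<forall>\<alpha> \<beta>. \<alpha> < \<beta> \<longrightarrow> f \<alpha> <* f \<beta>"
    and Z_def: "\<forall>\<alpha>. Z \<alpha> = {n. \<exists>i. n \<in> P i \<and> n > f \<alpha> i}"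
    and x_lim: "\<And>k E. finite E \<Longrightarrow> E \<subseteq> {..\<gamma>} \<Longrightarrow> \<forall>\<^sub>F n in F. x n \<in> basic_nbhd P Z k E"
    and fst_eq: "\<And>n. map_option fst (\<sigma> n) = map_option fst (x n)"
    and low: "\<And>n a b. \<sigma> n = Some (a, b) \<Longrightarrow> b < \<alpha>\<^sub>0 \<Longrightarrow> \<sigma> n = x n \<and> b < \<gamma>"
    and bound: "\<And>n a b i. x n = Some (a, b) \<Longrightarrow> a \<in> P i \<Longrightarrow> a \<le> g i"
    and dom: "\<And>\<alpha>. \<alpha>\<^sub>0 \<le> \<alpha> \<Longrightarrow> g <* f \<alpha>"
  shows "limitin (space_X P Z) \<sigma> None F"
proof (rule limitin_space_X_NoneI)
  have "\<forall>\<^sub>F n in F. x n \<in> basic_nbhd P Z k {}" for k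
    using x_lim by simp
  then show \<sigma>_lev: "\<forall>\<^sub>F n in F. \<sigma> n \<in> basic_nbhd P Z k {}" for k
    by (rule eventually_mono) (simp add: basic_nbhd_fst_cong[OF fst_eq])
  have \<sigma>_bound: "a \<le> g i" if "\<sigma> n = Some (a, b)" and "a \<in> P i" for n a b i
    using fst_eq[of n] bound that by (cases "x n") auto
  show "\<forall>\<^sub>F n in F. \<sigma> n \<in> basic_nbhd P Z 0 {\<alpha>}" for \<alpha>
  proof (cases "\<alpha>\<^sub>0 \<le> \<alpha>")
    case True
    show ?thesis
      by (rule eventually_basic_nbhd_if_dominated[where x = \<sigma> and g = g,
            OF Z_def \<sigma>_lev \<sigma>_bound dom[OF True]])
  next
    case False
    then show ?thesis
      using eventually_basic_nbhd_below_lift[OF f_incr Z_def x_lim low] by simp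
  qed
qed

lemma sequentially_selective_at_None:
  fixes f :: "'w::wellorder \<Rightarrow> nat \<Rightarrow> nat"
  assumes unc: "uncountable (UNIV :: 'w set)"
    and seg: "\<forall>\<alpha>::'w. countable {\<beta>. \<beta> < \<alpha>}"
    and f_incr: "\<forall>\<alpha> \<beta>. \<alpha> < \<beta> \<longrightarrow> f \<alpha> <* f \<beta>"
    and f_dom: "\<forall>g. \<exists>\<alpha>. g <* f \<alpha>"
    and Z_def: "\<forall>\<alpha>. Z \<alpha> = {n. \<exists>i. n \<in> P i \<and> n > f \<alpha> i}"
  shows "sequentially_selective_at (space_X P Z) None"
  unfolding sequentially_selective_at_def
proof (intro allI impI)
  fix A :: "nat \<Rightarrow> (nat \<times> 'w) option set"
  assume ne: "\<forall>n. A n \<noteq> {}" and lim: "in_lower_limit (space_X P Z) None A"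
  obtain \<gamma> where \<gamma>:
    "\<And>n a b. Some (a, b) \<in> A n \<Longrightarrow> \<exists>\<delta>. \<forall>b'. Some (a, b') \<in> A n \<longrightarrow> b' < \<delta> \<Longrightarrow> b < \<gamma>"
    by (rule bounded_fibres_bounded[OF unc seg, where A = A]) blast
  have "{..\<gamma>} = insert \<gamma> {\<beta>. \<beta> < \<gamma>}"
    by auto
  then have countable_\<gamma>: "countable {..\<gamma>}"
    using seg by simp
  obtain x where x_in: "\<And>n. x n \<in> A n" and x_lim:
    "\<And>k E. finite E \<Longrightarrow> E \<subseteq> {..\<gamma>} \<Longrightarrow> \<forall>\<^sub>F n in sequentially. x n \<in> basic_nbhd P Z k E"
    by (rule countable_diagonal_selection[OF _ lim countable_\<gamma>]) (use ne in blast)+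
  obtain g where g: "\<And>n a b i. x n = Some (a, b) \<Longrightarrow> a \<in> P i \<Longrightarrow> a \<le> g i"
    by (rule exists_levelwise_bound[where x = x]) (use x_lim in auto)
  obtain \<alpha>\<^sub>0 where \<alpha>\<^sub>0: "\<And>\<alpha>. \<alpha>\<^sub>0 \<le> \<alpha> \<Longrightarrow> g <* f \<alpha>"
    by (rule exists_dominating_tail[OF f_incr f_dom]) blast
  obtain \<sigma> where \<sigma>_in: "\<And>n. \<sigma> n \<in> A n"
    and \<sigma>_fst: "\<And>n. map_option fst (\<sigma> n) = map_option fst (x n)"
    and \<sigma>_low: "\<And>n a b. \<sigma> n = Some (a, b) \<Longrightarrow> b < \<alpha>\<^sub>0 \<Longrightarrow>
      \<sigma> n = x n \<and> (\<exists>\<delta>. \<forall>b'. Some (a, b') \<in> A n \<longrightarrow> b' < \<delta>)"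
    by (rule lift_unbounded_fibres[where x = x and A = A and \<alpha>\<^sub>0 = \<alpha>\<^sub>0]) (use x_in in blast)+
  have \<sigma>_below: "\<sigma> n = x n \<and> b < \<gamma>" if "\<sigma> n = Some (a, b)" and "b < \<alpha>\<^sub>0" for n a b
    using \<sigma>_low[OF that] \<sigma>_in[of n] \<gamma> that(1) by metis
  have "limitin (space_X P Z) \<sigma> None sequentially"
    by (rule limitin_space_X_None_lifted[where x = x and \<gamma> = \<gamma> and \<alpha>\<^sub>0 = \<alpha>\<^sub>0 and g = g,
          OF f_incr Z_def x_lim \<sigma>_fst \<sigma>_below g \<alpha>\<^sub>0])
  with \<sigma>_in show "\<exists>\<sigma>. (\<forall>n. \<sigma> n \<in> A n) \<and> limitin (space_X P Z) \<sigma> None sequentially"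
    by blast
qed

section \<open>Failure of U-selectivity\<close>

lemma openin_filter_space_iff:
  "openin (filter_space U) S \<longleftrightarrow> (None \<in> S \<longrightarrow> (\<forall>\<^sub>F n in U. Some n \<in> S))"
proof -
  have "istopology (\<lambda>S. None \<in> S \<longrightarrow> (\<forall>\<^sub>F n in U. Some n \<in> S))"
    unfolding istopology_def
  proof (intro conjI allI impI)
    fix S T
    assume "None \<in> S \<longrightarrow> (\<forall>\<^sub>F n in U. Some n \<in> S)" and "None \<in> T \<longrightarrow> (\<forall>\<^sub>F n in U. Some n \<in> T)"
      and "None \<in> S \<inter> T"
    then show "\<forall>\<^sub>F n in U. Some n \<in> S \<inter> T"
      by (simp add: eventually_conj)
  next
    fix K assume K: "\<forall>S\<in>K. None \<in> S \<longrightarrow> (\<forall>\<^sub>F n in U. Some n \<in> S)" and "None \<in> \<Union>K"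
    then obtain S where "S \<in> K" and "None \<in> S"
      by blast
    with K have "\<forall>\<^sub>F n in U. Some n \<in> S"
      by blast
    then show "\<forall>\<^sub>F n in U. Some n \<in> \<Union>K"
      by (rule eventually_mono) (use \<open>S \<in> K\<close> in blast)
  qed
  then show ?thesis
    unfolding filter_space_def by simp
qed

lemma topspace_filter_space [simp]: "topspace (filter_space U) = UNIV"
  using openin_subset[of "filter_space U" UNIV] by (auto simp: openin_filter_space_iff)

definition fibre_map :: "nat option \<Rightarrow> (nat \<times> 'w::wellorder) option set"
  where "fibre_map y = (case y of None \<Rightarrow> {None} | Some n \<Rightarrow> Some ` ({n} \<times> UNIV))"

lemma closedin_fibre_map:
  assumes P_cover: "(\<Union>i. P i) = UNIV"
  shows "closedin (space_X P Z) (fibre_map y)"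
proof (cases y)
  case None
  have "openin (space_X P Z) (- {None})"
    by (simp add: openin_space_X_iff)
  then show ?thesis
    by (simp add: closedin_def None fibre_map_def Compl_eq_Diff_UNIV)
next
  case (Some n)
  obtain i where "n \<in> P i"
    using P_cover by blast
  then have "basic_nbhd P Z (Suc i) {} \<subseteq> - Some ` ({n} \<times> UNIV)"
    by (auto simp: basic_nbhd_def)
  then have "openin (space_X P Z) (- Some ` ({n} \<times> UNIV))"
    unfolding openin_space_X_iff by blast
  then show ?thesis
    by (simp add: closedin_def Some fibre_map_def Compl_eq_Diff_UNIV)
qed

lemma lsc_map_fibre_map:
  fixes Z :: "'w::wellorder \<Rightarrow> nat set"
  assumes unc: "uncountable (UNIV :: 'w set)" and seg: "\<forall>\<alpha>::'w. countable {\<beta>. \<beta> < \<alpha>}"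
    and P_cover: "(\<Union>i. P i) = UNIV"
    and P_in_I: "\<forall>i. \<forall>\<^sub>F n in U. n \<in> - P i"
  shows "lsc_map (filter_space U) (space_X P Z) fibre_map"
  unfolding lsc_map_def
proof (intro conjI ballI allI impI)
  show "fibre_map y \<noteq> {}" for y
    by (auto simp: fibre_map_def split: option.split)
  show "closedin (space_X P Z) (fibre_map y)" for y
    by (rule closedin_fibre_map[OF P_cover])
next
  fix W assume W: "openin (space_X P Z) W"
  show "openin (filter_space U) {y \<in> topspace (filter_space U). fibre_map y \<inter> W \<noteq> {}}"
    unfolding openin_filter_space_iff
  proof
    assume "None \<in> {y \<in> topspace (filter_space U). fibre_map y \<inter> W \<noteq> {}}"
    then obtain k E where "finite E" and kE: "basic_nbhd P Z k E \<subseteq> W"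
      using W by (auto simp: fibre_map_def openin_space_X_iff)
    then obtain \<gamma> where \<gamma>: "\<And>\<alpha>. \<alpha> \<in> E \<Longrightarrow> \<alpha> < \<gamma>"
      by (metis countable_bounded[OF unc seg] countable_finite)
    have "\<forall>\<^sub>F n in U. \<forall>i\<in>{..<k}. n \<in> - P i"
      using P_in_I by (intro eventually_ball_finite) auto
    then show "\<forall>\<^sub>F n in U. Some n \<in> {y \<in> topspace (filter_space U). fibre_map y \<inter> W \<noteq> {}}"
    proof (rule eventually_mono)
      fix n assume "\<forall>i\<in>{..<k}. n \<in> - P i"
      then have "Some (n, \<gamma>) \<in> basic_nbhd P Z k E"
        using \<gamma> by (auto dest: less_asym)
      then have "Some (n, \<gamma>) \<in> W"
        using kE by blast
      then show "Some n \<in> {y \<in> topspace (filter_space U). fibre_map y \<inter> W \<noteq> {}}"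
        by (auto simp: fibre_map_def)
    qed
  qed
qed

lemma not_U_selective_space_X:
  fixes Z :: "'w::wellorder \<Rightarrow> nat set"
  assumes unc: "uncountable (UNIV :: 'w set)" and seg: "\<forall>\<alpha>::'w. countable {\<beta>. \<beta> < \<alpha>}"
    and P_cover: "(\<Union>i. P i) = UNIV"
    and P_in_I: "\<forall>i. \<forall>\<^sub>F n in U. n \<in> - P i"
    and Z_notin_I: "\<forall>\<alpha>. \<not> (\<forall>\<^sub>F n in U. n \<in> - Z \<alpha>)"
  shows "\<not> U_selective U (space_X P Z)"
proof
  assume "U_selective U (space_X P Z)"
  then obtain s where s_cont: "continuous_map (filter_space U) (space_X P Z) s"
    and "\<forall>y\<in>topspace (filter_space U). s y \<in> fibre_map y"
    using lsc_map_fibre_map[OF unc seg P_cover P_in_I]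
    unfolding U_selective_def selective_def by blast
  then have s_sel: "\<And>y. s y \<in> fibre_map y"
    by simp
  have s_None: "s None = None"
    using s_sel[of None] by (simp add: fibre_map_def)
  have s_Some: "s (Some n) = Some (n, snd (the (s (Some n))))" for n
    using s_sel[of "Some n"] by (auto simp: fibre_map_def)
  have "countable (range (\<lambda>n. snd (the (s (Some n)))))"
    by simp
  then obtain \<gamma> where "\<And>\<beta>. \<beta> \<in> range (\<lambda>n. snd (the (s (Some n)))) \<Longrightarrow> \<beta> < \<gamma>"
    by (rule countable_bounded[OF unc seg]) blast
  then have \<gamma>: "\<And>n. snd (the (s (Some n))) < \<gamma>"
    by blast
  have "openin (filter_space U) {y \<in> topspace (filter_space U). s y \<in> basic_nbhd P Z 0 {\<gamma>}}"
    using s_cont openin_space_X_basic_nbhd[of "{\<gamma>}"] unfolding continuous_map_def by blast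
  then have "\<forall>\<^sub>F n in U. s (Some n) \<in> basic_nbhd P Z 0 {\<gamma>}"
    using s_None by (simp add: openin_filter_space_iff)
  then have "\<forall>\<^sub>F n in U. n \<in> - Z \<gamma>"
    by (rule eventually_mono) (metis s_Some \<gamma> Some_in_basic_nbhd_iff singletonI ComplI)
  with Z_notin_I show False
    by blast
qed

theorem mainTheorem3:
  fixes f :: "'w::wellorder \<Rightarrow> nat \<Rightarrow> nat"
    and P :: "nat \<Rightarrow> nat set"
    and Z :: "'w \<Rightarrow> nat set"
    and U :: "nat filter"
  assumes omega1_uncountable: "uncountable (UNIV :: 'w set)"
    and omega1_segments: "\<forall>\<alpha>::'w. countable {\<beta>. \<beta> < \<alpha>}"
    and d_omega1: "dominating_number_is (UNIV :: 'w set)"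
    and f_incr: "\<forall>\<alpha> \<beta>. \<alpha> < \<beta> \<longrightarrow> f \<alpha> <* f \<beta>"
    and f_dom: "\<forall>g. \<exists>\<alpha>. g <* f \<alpha>"
    and P_inf: "\<forall>i. infinite (P i)"
    and P_disj: "\<forall>i j. i \<noteq> j \<longrightarrow> P i \<inter> P j = {}"
    and P_cover: "(\<Union>i. P i) = UNIV"
    and Z_def: "\<forall>\<alpha>. Z \<alpha> = {n. \<exists>i. n \<in> P i \<and> n > f \<alpha> i}"
    and P_in_I: "\<forall>i. eventually (\<lambda>n. n \<in> - P i) U"
    and Z_notin_I: "\<forall>\<alpha>. \<not> eventually (\<lambda>n. n \<in> - Z \<alpha>) U"
  shows "Frechet_space (space_X P Z) \<and> L_selective (space_X P Z) \<and> \<not> U_selective U (space_X P Z)"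
proof -
  have sel: "\<forall>x\<in>topspace (space_X P Z). sequentially_selective_at (space_X P Z) x"
  proof (intro ballI)
    fix x
    show "sequentially_selective_at (space_X P Z) x"
    proof (cases x)
      case None
      then show ?thesis
        using sequentially_selective_at_None[OF omega1_uncountable omega1_segments f_incr f_dom Z_def]
        by simp
    next
      case (Some p)
      then show ?thesis
        using sequentially_selective_at_isolated[OF openin_space_X_Some] by simp
    qed
  qed
  show ?thesis
    using Frechet_space_if_sequentially_selective[OF sel] L_selective_if_sequentially_selective[OF sel]
      not_U_selective_space_X[OF omega1_uncountable omega1_segments P_cover P_in_I Z_notin_I]
    by blast
qed

end
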